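(* For $n\ge1$, let $X_n=K_4'^{\,\Box n}$ be the $n$-fold Cartesian product of $K_4'$ with itself. Then $\rho(X_n)=3n$ and $\lambda_1(X_n)=n$.
   Context: For a digraph $X$ (finite vertex set, arcs are ordered pairs of distinct vertices), $H(X)$ has $(u,v)$-entry $1$ if $uv$ and $vu$ are arcs, $i$ if only $uv$ is an arc, $-i$ if only $vu$ is an arc, and $0$ otherwise; $\lambda_1(X)$ is its largest eigenvalue and $\rho(X)$ the largest absolute value of an eigenvalue. $K_4'$ is the digraph on $x_1,x_2,x_3,x_4$ with arcs $x_1x_2,x_2x_3,x_3x_4,x_4x_1$ together with the digons $\{x_1,x_3\}$ and $\{x_2,x_4\}$ (i.e., both arcs $x_1x_3,x_3x_1$ and both $x_2x_4,x_4x_2$). The Cartesian product $X\,\Box\,Y$ has vertex set $V(X)\times V(Y)$ and an arc from $(x_1,y_1)$ to $(x_2,y_2)$ whenever either $x_1x_2$ is an arc of $X$ and $y_1=y_2$, or $y_1y_2$ is an arc of $Y$ and $x_1=x_2$. *)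

theory Defs
  imports Complex_Main
begin

record 'a digraph =
  verts :: "'a set"
  arcs  :: "('a \<times> 'a) set"

definition herm_adj :: "'a digraph \<Rightarrow> 'a \<Rightarrow> 'a \<Rightarrow> complex" where
  "herm_adj X u v =
     (if (u, v) \<in> arcs X \<and> (v, u) \<in> arcs X then 1
      else if (u, v) \<in> arcs X then \<i>
      else if (v, u) \<in> arcs X then - \<i>
      else 0)"

definition herm_eigenvalue :: "'a digraph \<Rightarrow> complex \<Rightarrow> bool" where
  "herm_eigenvalue X \<mu> \<longleftrightarrow>
     (\<exists>f :: 'a \<Rightarrow> complex.
        (\<forall>v. v \<notin> verts X \<longrightarrow> f v = 0) \<and> (\<exists>v\<in>verts X. f v \<noteq> 0) \<and>
        (\<forall>u\<in>verts X. (\<Sum>v\<in>verts X. herm_adj X u v * f v) = \<mu> * f u))"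

definition herm_spectrum :: "'a digraph \<Rightarrow> complex set" where
  "herm_spectrum X = {\<mu>. herm_eigenvalue X \<mu>}"

text \<open>Largest eigenvalue (eigenvalues of a Hermitian matrix are real).\<close>
definition lambda1 :: "'a digraph \<Rightarrow> real" where
  "lambda1 X = Max (Re ` herm_spectrum X)"

definition herm_rho :: "'a digraph \<Rightarrow> real" where
  "herm_rho X = Max (cmod ` herm_spectrum X)"

text \<open>The digraph K4' on x1..x4 (represented by 1..4).\<close>
definition K4' :: "nat digraph" where
  "K4' = \<lparr> verts = {1, 2, 3, 4},
           arcs = {(1,2), (2,3), (3,4), (4,1), (1,3), (3,1), (2,4), (4,2)} \<rparr>"

definition cart_prod :: "'a digraph \<Rightarrow> 'b digraph \<Rightarrow> ('a \<times> 'b) digraph" where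
  "cart_prod X Y = \<lparr> verts = verts X \<times> verts Y,
     arcs = {((x1, y1), (x2, y2)) | x1 y1 x2 y2.
               ((x1, x2) \<in> arcs X \<and> y1 = y2 \<and> y1 \<in> verts Y) \<or>
               ((y1, y2) \<in> arcs Y \<and> x1 = x2 \<and> x1 \<in> verts X)} \<rparr>"

definition digraph_map :: "('a \<Rightarrow> 'b) \<Rightarrow> 'a digraph \<Rightarrow> 'b digraph" where
  "digraph_map g X = \<lparr> verts = g ` verts X,
     arcs = (\<lambda>(u, v). (g u, g v)) ` arcs X \<rparr>"

text \<open>n-fold Cartesian power X^{\<box> n}, with vertices represented as lists of length n:
  X^{\<box> 0} is the one-vertex digraph, X^{\<box> (n+1)} = X \<box> X^{\<box> n} (pairs (x, xs) written x # xs).\<close>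
fun cart_pow :: "'a digraph \<Rightarrow> nat \<Rightarrow> 'a list digraph" where
  "cart_pow X 0 = \<lparr> verts = {[]}, arcs = {} \<rparr>"
| "cart_pow X (Suc n) = digraph_map (\<lambda>(x, xs). x # xs) (cart_prod X (cart_pow X n))"

end

theory Submission
  imports Defs
begin

(* For irreflexive digraphs, H(X \<box> Y) = H(X) \<otimes> I + I \<otimes> H(Y). Hence sums of eigenvalues of
   the factors are eigenvalues of the product (tensor eigenvectors), and conversely, applying the
   spectral projectors of H(X) in the first coordinate to an eigenvector of X \<box> Y shows that every
   eigenvalue of X \<box> Y is an eigenvalue of X plus one of Y. The matrix H(K4') satisfies
   H^2 + 2H = 3I, with eigenvalues 1 (eigenvector (1,1,1,1)) and -3 (eigenvector (i,-1,-i,1)).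
   By induction the spectrum of the n-th power consists of numbers n - 4k with 0 \<le> k \<le> n,
   among them n and -3n. *)

lemma herm_eigenvalueI:
  assumes "u \<in> verts X" "f u \<noteq> 0"
    and "\<And>u. u \<in> verts X \<Longrightarrow> (\<Sum>v\<in>verts X. herm_adj X u v * f v) = \<mu> * f u"
  shows "herm_eigenvalue X \<mu>"
  unfolding herm_eigenvalue_def
proof (intro exI[of _ "\<lambda>v. if v \<in> verts X then f v else 0"] conjI ballI allI impI)
  fix u assume "u \<in> verts X"
  then show "(\<Sum>v\<in>verts X. herm_adj X u v * (if v \<in> verts X then f v else 0)) =
      \<mu> * (if u \<in> verts X then f u else 0)"
    using assms(3) by simp
qed (use assms(1,2) in auto)

lemma verts_digraph_map: "verts (digraph_map g X) = g ` verts X"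
  by (simp add: digraph_map_def)

lemma arc_digraph_map_iff:
  assumes "inj g"
  shows "(g u, g v) \<in> arcs (digraph_map g X) \<longleftrightarrow> (u, v) \<in> arcs X"
  using assms by (auto simp: digraph_map_def inj_eq)

lemma herm_adj_digraph_map:
  assumes "inj g"
  shows "herm_adj (digraph_map g X) (g u) (g v) = herm_adj X u v"
  by (simp add: herm_adj_def arc_digraph_map_iff[OF assms])

lemma herm_eigenvalue_digraph_map:
  assumes "inj g"
  shows "herm_eigenvalue (digraph_map g X) \<mu> \<longleftrightarrow> herm_eigenvalue X \<mu>"
proof -
  have inj_on: "inj_on g (verts X)" using assms by (rule inj_on_subset) simp
  have sum_eq: "(\<Sum>v'\<in>verts (digraph_map g X). herm_adj (digraph_map g X) (g u) v' * f v') =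
      (\<Sum>v\<in>verts X. herm_adj X u v * f (g v))" for u f
    by (simp add: verts_digraph_map sum.reindex[OF inj_on] herm_adj_digraph_map[OF assms])
  show ?thesis
  proof
    assume "herm_eigenvalue (digraph_map g X) \<mu>"
    then obtain f u where "u \<in> verts (digraph_map g X)" "f u \<noteq> 0" and
      eig: "\<forall>u\<in>verts (digraph_map g X). (\<Sum>v\<in>verts (digraph_map g X).
          herm_adj (digraph_map g X) u v * f v) = \<mu> * f u"
      unfolding herm_eigenvalue_def by blast
    then obtain x where "x \<in> verts X" "f (g x) \<noteq> 0" by (auto simp: verts_digraph_map)
    then show "herm_eigenvalue X \<mu>"
      by (rule herm_eigenvalueI) (use eig sum_eq in \<open>auto simp: verts_digraph_map\<close>)
  next
    assume "herm_eigenvalue X \<mu>"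
    then obtain f u where "u \<in> verts X" "f u \<noteq> 0" and
      eig: "\<forall>u\<in>verts X. (\<Sum>v\<in>verts X. herm_adj X u v * f v) = \<mu> * f u"
      unfolding herm_eigenvalue_def by blast
    then have "g u \<in> verts (digraph_map g X)" "(f \<circ> inv g) (g u) \<noteq> 0"
      using assms by (auto simp: verts_digraph_map)
    then show "herm_eigenvalue (digraph_map g X) \<mu>"
      by (rule herm_eigenvalueI) (use eig sum_eq assms in \<open>auto simp: verts_digraph_map\<close>)
  qed
qed

lemma irrefl_digraph_map:
  assumes "inj g" "irrefl (arcs X)"
  shows "irrefl (arcs (digraph_map g X))"
  using assms by (auto simp: irrefl_def digraph_map_def inj_eq)

lemma irrefl_cart_prod:
  assumes "irrefl (arcs X)" "irrefl (arcs Y)"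
  shows "irrefl (arcs (cart_prod X Y))"
  using assms by (auto simp: irrefl_def cart_prod_def)

lemma verts_cart_prod [simp]: "verts (cart_prod X Y) = verts X \<times> verts Y"
  by (simp add: cart_prod_def)

lemma herm_adj_cart_prod:
  assumes "irrefl (arcs X)" "irrefl (arcs Y)"
  shows "herm_adj (cart_prod X Y) (x, y) (x', y') =
    (if y = y' \<and> y \<in> verts Y then herm_adj X x x' else 0) +
    (if x = x' \<and> x \<in> verts X then herm_adj Y y y' else 0)"
  using assms by (auto simp: herm_adj_def cart_prod_def irrefl_def)

lemma sum_herm_adj_cart_prod:
  assumes "finite (verts X)" "finite (verts Y)" "irrefl (arcs X)" "irrefl (arcs Y)"
    and "x \<in> verts X" "y \<in> verts Y"
  shows "(\<Sum>v\<in>verts X \<times> verts Y. herm_adj (cart_prod X Y) (x, y) v * f v) =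
    (\<Sum>x'\<in>verts X. herm_adj X x x' * f (x', y)) + (\<Sum>y'\<in>verts Y. herm_adj Y y y' * f (x, y'))"
proof -
  have "(\<Sum>v\<in>verts X \<times> verts Y. herm_adj (cart_prod X Y) (x, y) v * f v) =
      (\<Sum>x'\<in>verts X. \<Sum>y'\<in>verts Y. if y' = y then herm_adj X x x' * f (x', y) else 0) +
      (\<Sum>y'\<in>verts Y. \<Sum>x'\<in>verts X. if x' = x then herm_adj Y y y' * f (x, y') else 0)"
    unfolding sum.cartesian_product' sum.swap[of _ "verts Y"] sum.distrib[symmetric]
    using assms by (intro sum.cong refl) (auto simp: herm_adj_cart_prod distrib_right)
  also have "\<dots> = (\<Sum>x'\<in>verts X. herm_adj X x x' * f (x', y)) +
      (\<Sum>y'\<in>verts Y. herm_adj Y y y' * f (x, y'))"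
    using assms by simp
  finally show ?thesis .
qed

lemma herm_eigenvalue_cart_prod_add:
  assumes fin: "finite (verts X)" "finite (verts Y)" and irr: "irrefl (arcs X)" "irrefl (arcs Y)"
    and "herm_eigenvalue X \<alpha>" "herm_eigenvalue Y \<beta>"
  shows "herm_eigenvalue (cart_prod X Y) (\<alpha> + \<beta>)"
proof -
  obtain f a where a: "a \<in> verts X" "f a \<noteq> 0"
    and f: "\<forall>x\<in>verts X. (\<Sum>x'\<in>verts X. herm_adj X x x' * f x') = \<alpha> * f x"
    using assms(5) unfolding herm_eigenvalue_def by blast
  obtain g b where b: "b \<in> verts Y" "g b \<noteq> 0"
    and g: "\<forall>y\<in>verts Y. (\<Sum>y'\<in>verts Y. herm_adj Y y y' * g y') = \<beta> * g y"
    using assms(6) unfolding herm_eigenvalue_def by blast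
  let ?F = "\<lambda>(x, y). f x * g y"
  show ?thesis
  proof (rule herm_eigenvalueI[where f = ?F])
    show "(a, b) \<in> verts (cart_prod X Y)" "?F (a, b) \<noteq> 0"
      using a b by auto
  next
    fix u assume "u \<in> verts (cart_prod X Y)"
    then obtain x y where u: "u = (x, y)" "x \<in> verts X" "y \<in> verts Y" by auto
    have "(\<Sum>v\<in>verts (cart_prod X Y). herm_adj (cart_prod X Y) u v * ?F v) =
        (\<Sum>x'\<in>verts X. herm_adj X x x' * f x') * g y +
        f x * (\<Sum>y'\<in>verts Y. herm_adj Y y y' * g y')"
      using u by (simp add: sum_herm_adj_cart_prod[OF fin irr] sum_distrib_left sum_distrib_right
          mult_ac)
    also have "\<dots> = (\<alpha> + \<beta>) * ?F u"
      using u f g by (simp add: algebra_simps)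
    finally show "(\<Sum>v\<in>verts (cart_prod X Y). herm_adj (cart_prod X Y) u v * ?F v) =
        (\<alpha> + \<beta>) * ?F u" .
  qed
qed

lemma cart_prod_eigenvector_slice:
  assumes fin: "finite (verts X)" "finite (verts Y)" and irr: "irrefl (arcs X)" "irrefl (arcs Y)"
    and eig: "\<And>u. u \<in> verts (cart_prod X Y) \<Longrightarrow>
      (\<Sum>v\<in>verts (cart_prod X Y). herm_adj (cart_prod X Y) u v * f v) = \<mu> * f u"
    and left_eig: "\<And>x z. x \<in> verts X \<Longrightarrow> z \<in> verts X \<Longrightarrow>
      (\<Sum>y\<in>verts X. c x y * herm_adj X y z) = \<nu> * c x z"
    and x: "x \<in> verts X" and y: "y \<in> verts Y"
  shows "(\<Sum>y'\<in>verts Y. herm_adj Y y y' * (\<Sum>x'\<in>verts X. c x x' * f (x', y'))) =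
    (\<mu> - \<nu>) * (\<Sum>x'\<in>verts X. c x x' * f (x', y))"
proof -
  have row: "(\<Sum>y'\<in>verts Y. herm_adj Y y y' * f (x', y')) =
      \<mu> * f (x', y) - (\<Sum>z\<in>verts X. herm_adj X x' z * f (z, y))" if "x' \<in> verts X" for x'
  proof -
    have "(\<Sum>z\<in>verts X. herm_adj X x' z * f (z, y)) +
        (\<Sum>y'\<in>verts Y. herm_adj Y y y' * f (x', y')) = \<mu> * f (x', y)"
      using eig[of "(x', y)"] that y by (simp add: sum_herm_adj_cart_prod[OF fin irr that y])
    then show ?thesis by (metis add_diff_cancel_left')
  qed
  have "(\<Sum>y'\<in>verts Y. herm_adj Y y y' * (\<Sum>x'\<in>verts X. c x x' * f (x', y'))) =
      (\<Sum>y'\<in>verts Y. \<Sum>x'\<in>verts X. c x x' * (herm_adj Y y y' * f (x', y')))"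
    by (simp add: sum_distrib_left mult.left_commute)
  also have "\<dots> = (\<Sum>x'\<in>verts X. c x x' * (\<Sum>y'\<in>verts Y. herm_adj Y y y' * f (x', y')))"
    by (subst sum.swap) (simp add: sum_distrib_left)
  also have "\<dots> = (\<Sum>x'\<in>verts X.
      c x x' * (\<mu> * f (x', y) - (\<Sum>z\<in>verts X. herm_adj X x' z * f (z, y))))"
    by (intro sum.cong refl) (simp add: row)
  also have "\<dots> = \<mu> * (\<Sum>x'\<in>verts X. c x x' * f (x', y)) -
      (\<Sum>x'\<in>verts X. \<Sum>z\<in>verts X. c x x' * herm_adj X x' z * f (z, y))"
    by (simp add: right_diff_distrib sum_subtractf sum_distrib_left mult_ac)
  also have "(\<Sum>x'\<in>verts X. \<Sum>z\<in>verts X. c x x' * herm_adj X x' z * f (z, y)) =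
      (\<Sum>z\<in>verts X. (\<Sum>x'\<in>verts X. c x x' * herm_adj X x' z) * f (z, y))"
    by (subst sum.swap) (simp add: sum_distrib_right)
  also have "\<dots> = \<nu> * (\<Sum>z\<in>verts X. c x z * f (z, y))"
    using x by (simp add: left_eig sum_distrib_left mult.assoc)
  finally show ?thesis by (simp add: left_diff_distrib)
qed

lemma herm_eigenvalue_cart_prod_split:
  assumes fin: "finite (verts X)" "finite (verts Y)" and irr: "irrefl (arcs X)" "irrefl (arcs Y)"
    and "finite I"
    and resolution: "\<And>x z. x \<in> verts X \<Longrightarrow> z \<in> verts X \<Longrightarrow>
      (\<Sum>i\<in>I. c i x z) = (if x = z then 1 else 0)"
    and left_eig: "\<And>i x z. i \<in> I \<Longrightarrow> x \<in> verts X \<Longrightarrow> z \<in> verts X \<Longrightarrow>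
      (\<Sum>y\<in>verts X. c i x y * herm_adj X y z) = \<nu> i * c i x z"
    and eigenvalue: "herm_eigenvalue (cart_prod X Y) \<mu>"
  shows "\<exists>i\<in>I. herm_eigenvalue Y (\<mu> - \<nu> i)"
proof -
  obtain f u where "u \<in> verts (cart_prod X Y)" "f u \<noteq> 0"
    and eig: "\<And>u. u \<in> verts (cart_prod X Y) \<Longrightarrow>
      (\<Sum>v\<in>verts (cart_prod X Y). herm_adj (cart_prod X Y) u v * f v) = \<mu> * f u"
    using eigenvalue unfolding herm_eigenvalue_def by blast
  then obtain x y where x: "x \<in> verts X" and y: "y \<in> verts Y" and "f (x, y) \<noteq> 0" by auto
  define slice where "slice i y' = (\<Sum>x'\<in>verts X. c i x x' * f (x', y'))" for i y'
  have "(\<Sum>i\<in>I. slice i y) = (\<Sum>x'\<in>verts X. (\<Sum>i\<in>I. c i x x') * f (x', y))"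
    unfolding slice_def sum_distrib_right by (rule sum.swap)
  also have "\<dots> = (\<Sum>x'\<in>verts X. if x = x' then f (x', y) else 0)"
    using x by (intro sum.cong refl) (simp add: resolution)
  also have "\<dots> = f (x, y)"
    using x fin by simp
  finally obtain i where "i \<in> I" "slice i y \<noteq> 0"
    using \<open>f (x, y) \<noteq> 0\<close> by (metis sum.not_neutral_contains_not_neutral)
  moreover have "herm_eigenvalue Y (\<mu> - \<nu> i)"
    by (rule herm_eigenvalueI[where f = "slice i", OF y \<open>slice i y \<noteq> 0\<close>])
      (unfold slice_def, rule cart_prod_eigenvector_slice[OF fin irr eig left_eig[OF \<open>i \<in> I\<close>] x])
  ultimately show ?thesis by blast
qed

lemma inj_Cons_pair: "inj (\<lambda>(x, xs). x # xs)"
  by (auto simp: inj_def)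

lemma herm_eigenvalue_cart_pow_0: "herm_eigenvalue (cart_pow X 0) \<mu> \<longleftrightarrow> \<mu> = 0"
  by (auto simp: herm_eigenvalue_def herm_adj_def intro!: exI[of _ "\<lambda>v. if v = [] then 1 else 0"])

lemma herm_eigenvalue_cart_pow_Suc:
  "herm_eigenvalue (cart_pow X (Suc n)) \<mu> \<longleftrightarrow> herm_eigenvalue (cart_prod X (cart_pow X n)) \<mu>"
  by (simp add: herm_eigenvalue_digraph_map[OF inj_Cons_pair])

lemma finite_verts_cart_pow: "finite (verts X) \<Longrightarrow> finite (verts (cart_pow X n))"
  by (induction n) (simp_all add: verts_digraph_map)

lemma irrefl_cart_pow: "irrefl (arcs X) \<Longrightarrow> irrefl (arcs (cart_pow X n))"
proof (induction n)
  case 0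
  show ?case by (simp add: irrefl_def)
next
  case (Suc n)
  then show ?case by (simp add: irrefl_digraph_map[OF inj_Cons_pair] irrefl_cart_prod)
qed

lemma verts_K4': "verts K4' = {1, 2, 3, 4}"
  by (simp add: K4'_def)

lemma irrefl_K4': "irrefl (arcs K4')"
  by (simp add: K4'_def irrefl_def)

lemma herm_adj_K4':
  "herm_adj K4' 1 1 = 0"   "herm_adj K4' 1 2 = \<i>"  "herm_adj K4' 1 3 = 1"  "herm_adj K4' 1 4 = -\<i>"
  "herm_adj K4' 2 1 = -\<i>" "herm_adj K4' 2 2 = 0"  "herm_adj K4' 2 3 = \<i>" "herm_adj K4' 2 4 = 1"
  "herm_adj K4' 3 1 = 1"   "herm_adj K4' 3 2 = -\<i>" "herm_adj K4' 3 3 = 0"  "herm_adj K4' 3 4 = \<i>"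
  "herm_adj K4' 4 1 = \<i>"  "herm_adj K4' 4 2 = 1"  "herm_adj K4' 4 3 = -\<i>" "herm_adj K4' 4 4 = 0"
  by (simp_all add: herm_adj_def K4'_def)

(* Case splits on membership in {1, 2, 3, 4} produce the vertex 1 as Suc 0. *)
lemmas herm_adj_K4'_Suc_0 = herm_adj_K4'(1-5,9,13)[unfolded One_nat_def]

lemma herm_eigenvalue_K4': "\<nu> \<in> {1, -3} \<Longrightarrow> herm_eigenvalue K4' \<nu>"
proof (elim insertE)
  show "herm_eigenvalue K4' \<nu>" if "\<nu> = 1"
    by (rule herm_eigenvalueI[where f = "\<lambda>_. 1", of 1])
      (auto simp: that verts_K4' herm_adj_K4' herm_adj_K4'_Suc_0)
  show "herm_eigenvalue K4' \<nu>" if "\<nu> = -3"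
    by (rule herm_eigenvalueI[where f = "\<lambda>v. \<i> ^ v", of 1])
      (auto simp: that verts_K4' herm_adj_K4' herm_adj_K4'_Suc_0 power3_eq_cube)
qed simp

(* The Lagrange projector (H - \<nu>' I) / (\<nu> - \<nu>') onto the \<nu>-eigenspace, where \<nu>' = -2 - \<nu> is
   the other eigenvalue; meaningful for \<nu> \<in> {1, -3}. *)
definition K4'_proj :: "complex \<Rightarrow> nat \<Rightarrow> nat \<Rightarrow> complex" where
  "K4'_proj \<nu> x y = (herm_adj K4' x y + (2 + \<nu>) * (if x = y then 1 else 0)) / (2 * \<nu> + 2)"

lemma herm_adj_K4'_square:
  assumes "x \<in> verts K4'" "z \<in> verts K4'"
  shows "(\<Sum>y\<in>verts K4'. herm_adj K4' x y * herm_adj K4' y z) =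
    3 * (if x = z then 1 else 0) - 2 * herm_adj K4' x z"
  using assms by (auto simp: verts_K4' herm_adj_K4' herm_adj_K4'_Suc_0)

lemma K4'_proj_resolution:
  "x \<in> verts K4' \<Longrightarrow> z \<in> verts K4' \<Longrightarrow>
    (\<Sum>\<nu>\<in>{1, -3}. K4'_proj \<nu> x z) = (if x = z then 1 else 0)"
  by (simp add: K4'_proj_def field_simps)

lemma K4'_proj_left_eig:
  assumes "\<nu> \<in> {1, -3}" "x \<in> verts K4'" "z \<in> verts K4'"
  shows "(\<Sum>y\<in>verts K4'. K4'_proj \<nu> x y * herm_adj K4' y z) = \<nu> * K4'_proj \<nu> x z"
proof -
  have "(\<Sum>y\<in>verts K4'. K4'_proj \<nu> x y * herm_adj K4' y z) =
      (\<Sum>y\<in>verts K4'. (herm_adj K4' x y * herm_adj K4' y z +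
        (2 + \<nu>) * (if x = y then herm_adj K4' y z else 0)) / (2 * \<nu> + 2))"
    by (intro sum.cong refl) (simp add: K4'_proj_def ring_distribs)
  also have "\<dots> = ((\<Sum>y\<in>verts K4'. herm_adj K4' x y * herm_adj K4' y z) +
      (2 + \<nu>) * herm_adj K4' x z) / (2 * \<nu> + 2)"
    using assms(2) by (simp add: sum_divide_distrib[symmetric] sum.distrib
        sum_distrib_left[symmetric] verts_K4' del: insert_iff)
  also have "\<dots> = \<nu> * K4'_proj \<nu> x z"
    unfolding herm_adj_K4'_square[OF assms(2,3)] using assms(1)
    by (auto simp: K4'_proj_def field_simps)
  finally show ?thesis .
qed

lemma finite_verts_K4': "finite (verts K4')"
  by (simp add: verts_K4')

lemmas finite_verts_K4'_pow = finite_verts_cart_pow[OF finite_verts_K4']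

lemmas irrefl_K4'_pow = irrefl_cart_pow[OF irrefl_K4']

lemma herm_eigenvalue_K4'_pow:
  assumes "\<nu> \<in> {1, -3}"
  shows "herm_eigenvalue (cart_pow K4' n) (of_nat n * \<nu>)"
proof (induction n)
  case 0
  show ?case by (simp only: herm_eigenvalue_cart_pow_0) simp
next
  case (Suc n)
  have "herm_eigenvalue (cart_prod K4' (cart_pow K4' n)) (\<nu> + of_nat n * \<nu>)"
    using herm_eigenvalue_K4'[OF assms] Suc.IH
    by (intro herm_eigenvalue_cart_prod_add finite_verts_K4' finite_verts_K4'_pow irrefl_K4'
        irrefl_K4'_pow)
  then show ?case by (simp add: herm_eigenvalue_cart_pow_Suc algebra_simps del: cart_pow.simps)
qed

lemma herm_eigenvalue_K4'_pow_cases: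
  "herm_eigenvalue (cart_pow K4' n) \<mu> \<Longrightarrow> \<exists>k\<le>n. \<mu> = of_int (int n - 4 * int k)"
proof (induction n arbitrary: \<mu>)
  case 0
  then have "\<mu> = 0" by (simp only: herm_eigenvalue_cart_pow_0)
  then show ?case by simp
next
  case (Suc n)
  then have "herm_eigenvalue (cart_prod K4' (cart_pow K4' n)) \<mu>"
    by (simp add: herm_eigenvalue_cart_pow_Suc del: cart_pow.simps)
  then have "\<exists>\<nu>\<in>{1, -3}. herm_eigenvalue (cart_pow K4' n) (\<mu> - \<nu>)"
    by (intro herm_eigenvalue_cart_prod_split[where \<nu> = "\<lambda>\<nu>. \<nu>", OF finite_verts_K4'
          finite_verts_K4'_pow irrefl_K4' irrefl_K4'_pow _ K4'_proj_resolution K4'_proj_left_eig])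
      simp_all
  then obtain \<nu> k where \<nu>: "\<nu> = 1 \<or> \<nu> = -3"
    and "k \<le> n" and k: "\<mu> - \<nu> = of_int (int n - 4 * int k)"
    using Suc.IH by blast
  from \<nu> show ?case
  proof
    assume "\<nu> = 1"
    with k have "\<mu> = of_int (int (Suc n) - 4 * int k)" by (simp add: algebra_simps)
    with \<open>k \<le> n\<close> show ?case by auto
  next
    assume "\<nu> = -3"
    with k have "\<mu> = of_int (int (Suc n) - 4 * int (Suc k))" by (simp add: algebra_simps)
    with \<open>k \<le> n\<close> show ?case by auto
  qed
qed

lemma herm_spectrum_K4'_pow:
  "herm_spectrum (cart_pow K4' n) \<subseteq> (\<lambda>k. of_int (int n - 4 * int k)) ` {..n}"
proof
  fix \<mu> assume "\<mu> \<in> herm_spectrum (cart_pow K4' n)"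
  then obtain k where "k \<le> n" "\<mu> = of_int (int n - 4 * int k)"
    using herm_eigenvalue_K4'_pow_cases unfolding herm_spectrum_def by blast
  then show "\<mu> \<in> (\<lambda>k. of_int (int n - 4 * int k)) ` {..n}" by simp
qed

theorem proposition5p5:
  fixes n :: nat
  assumes "n \<ge> 1"
  shows "herm_rho (cart_pow K4' n) = 3 * real n \<and> lambda1 (cart_pow K4' n) = real n"
proof -
  let ?S = "herm_spectrum (cart_pow K4' n)"
  have fin: "finite ?S"
    using herm_spectrum_K4'_pow by (rule finite_subset) simp
  have bounds: "Re \<mu> \<le> real n \<and> cmod \<mu> \<le> 3 * real n" if "\<mu> \<in> ?S" for \<mu>
  proof -
    obtain k where "k \<le> n" and \<mu>: "\<mu> = of_int (int n - 4 * int k)"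
      using subsetD[OF herm_spectrum_K4'_pow \<open>\<mu> \<in> ?S\<close>] by auto
    then show ?thesis
      unfolding \<mu> norm_of_int by simp
  qed
  have n_in: "of_nat n * 1 \<in> ?S" and m_in: "of_nat n * (-3) \<in> ?S"
    unfolding herm_spectrum_def mem_Collect_eq by (rule herm_eigenvalue_K4'_pow; simp)+
  have "real n \<in> Re ` ?S"
    using image_eqI[OF _ n_in, of "real n" Re] by simp
  moreover have "3 * real n \<in> cmod ` ?S"
    using image_eqI[OF _ m_in, of "3 * real n" cmod] by (simp add: norm_mult)
  ultimately show ?thesis
    unfolding herm_rho_def lambda1_def using fin bounds by (intro conjI Max_eqI) auto
qed

end
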